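(* Let $\mathcal{G}$ be a $k$-uniform hypergraph with $n$ vertices. Then \[ {\rm bw}(\mathcal{G}) \geq\frac{n+(-1)^n}{k(n+1)}\sum_{j = 1}^n \alpha _j(\mathcal{G}). \]
   Context: A $k$-uniform hypergraph $\mathcal{G}$ has vertex set $V(\mathcal{G})=[n]$ and edge set $E(\mathcal{G})$ of $k$-element subsets of $V(\mathcal{G})$. For $\mathbf{x}\in\mathbb{R}^n$, $\mathcal{L}_\mathcal{G}\mathbf{x}^k=\sum_{\{i_1,\ldots,i_k\}\in E(\mathcal{G})}\left(x_{i_1}^k+\cdots+x_{i_k}^k-k\,x_{i_1}\cdots x_{i_k}\right)$. The inverse Perron value of vertex $j$ is $\alpha_j(\mathcal{G})=\min\{\mathcal{L}_\mathcal{G}\mathbf{x}^k : \mathbf{x}\in\mathbb{R}^n_+,\ \sum_{i=1}^n x_i^k=1,\ x_j=0\}$ ($\mathbb{R}^n_+$ = nonnegative vectors). For $S\subseteq V(\mathcal{G})$ with complement $\overline{S}=V(\mathcal{G})\setminus S$, $E(S,\overline{S})$ is the set of edges containing vertices of both $S$ and $\overline{S}$. The bipartition width is ${\rm bw}(\mathcal{G})=\min\{|E(S,\overline{S})| : S\subseteq V(\mathcal{G}),\ |S|=\lfloor n/2\rfloor\}$. *)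

theory Defs
  imports "HOL-Analysis.Analysis"
begin

definition uniform_hypergraph :: "nat \<Rightarrow> nat \<Rightarrow> nat set set \<Rightarrow> bool" where
  "uniform_hypergraph n k E \<longleftrightarrow> (\<forall>e\<in>E. e \<subseteq> {1..n} \<and> card e = k)"

definition lap_form :: "nat \<Rightarrow> nat set set \<Rightarrow> (nat \<Rightarrow> real) \<Rightarrow> real" where
  "lap_form k E x = (\<Sum>e\<in>E. (\<Sum>i\<in>e. x i ^ k) - real k * (\<Prod>i\<in>e. x i))"

text \<open>Inverse Perron value of vertex j (a minimum; stated as the infimum of the value set,
  which is attained by compactness).\<close>
definition inv_perron :: "nat \<Rightarrow> nat \<Rightarrow> nat set set \<Rightarrow> nat \<Rightarrow> real" where
  "inv_perron n k E j = Inf {lap_form k E x | x.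
       (\<forall>i\<in>{1..n}. x i \<ge> 0) \<and> (\<forall>i. i \<notin> {1..n} \<longrightarrow> x i = 0) \<and>
       (\<Sum>i=1..n. x i ^ k) = 1 \<and> x j = 0}"

definition cut_edges :: "nat \<Rightarrow> nat set set \<Rightarrow> nat set \<Rightarrow> nat set set" where
  "cut_edges n E S = {e\<in>E. e \<inter> S \<noteq> {} \<and> e \<inter> ({1..n} - S) \<noteq> {}}"

definition bip_width :: "nat \<Rightarrow> nat set set \<Rightarrow> nat" where
  "bip_width n E = Min {card (cut_edges n E S) | S. S \<subseteq> {1..n} \<and> card S = n div 2}"

end

theory Submission
  imports Defs
begin

text \<open>Fix a bisection S, T of optimal width with |S| = p \<le> q = |T|, and let C be its cut.
  For j \<in> S, the vector that is constant on T (and zero elsewhere) is admissible for \<alpha>_j;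
  every edge inside T contributes 0 to its Laplacian form and every cut edge e contributes
  |e \<inter> T|/q, so \<alpha>_j \<le> (\<Sum>e\<in>C. |e \<inter> T|)/q; symmetrically for j \<in> T. Summing over j and
  using |e \<inter> S| + |e \<inter> T| = k gives \<Sum>j. \<alpha>_j \<le> (q/p) k |C|, and (n + (-1)^n)/(n + 1) is
  exactly p/q.\<close>

definition perron_vectors :: "nat \<Rightarrow> nat \<Rightarrow> nat \<Rightarrow> (nat \<Rightarrow> real) set" where
  "perron_vectors n k j = {x. (\<forall>i\<in>{1..n}. x i \<ge> 0) \<and> (\<forall>i. i \<notin> {1..n} \<longrightarrow> x i = 0) \<and>
       (\<Sum>i=1..n. x i ^ k) = 1 \<and> x j = 0}"

lemma inv_perron_eq_Inf_image:
  "inv_perron n k E j = Inf (lap_form k E ` perron_vectors n k j)"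
  unfolding inv_perron_def perron_vectors_def by (simp add: setcompr_eq_image)

lemma uniform_hypergraph_finite:
  assumes "uniform_hypergraph n k E"
  shows "finite E"
proof (rule finite_subset)
  show "E \<subseteq> Pow {1..n}"
    using assms unfolding uniform_hypergraph_def by auto
qed simp

lemma perron_vectors_le_one:
  assumes "x \<in> perron_vectors n k j" "k > 0" "i \<in> {1..n}"
  shows "x i \<le> 1"
proof -
  have nonneg: "\<forall>i\<in>{1..n}. x i \<ge> 0" and norm: "(\<Sum>i=1..n. x i ^ k) = 1"
    using assms(1) unfolding perron_vectors_def by auto
  have "x i ^ k \<le> (\<Sum>i=1..n. x i ^ k)"
    by (rule member_le_sum) (use assms(3) nonneg in auto)
  then show ?thesis
    using assms(2,3) nonneg norm by (simp add: power_le_one_iff)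
qed

lemma lap_form_ge_on_perron_vectors:
  assumes "uniform_hypergraph n k E" "k > 0" "x \<in> perron_vectors n k j"
  shows "- (real k * real (card E)) \<le> lap_form k E x"
proof -
  have nonneg: "\<forall>i\<in>{1..n}. x i \<ge> 0"
    using assms(3) unfolding perron_vectors_def by auto
  have "- real k \<le> (\<Sum>i\<in>e. x i ^ k) - real k * (\<Prod>i\<in>e. x i)" if "e \<in> E" for e
  proof -
    have e: "e \<subseteq> {1..n}"
      using assms(1) that unfolding uniform_hypergraph_def by auto
    have "(\<Prod>i\<in>e. x i) \<le> 1"
      using e nonneg perron_vectors_le_one[OF assms(3,2)] by (intro prod_le_1) auto
    moreover have "0 \<le> (\<Sum>i\<in>e. x i ^ k)"
      using e nonneg by (intro sum_nonneg) auto
    ultimately show ?thesis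
      using mult_left_le[of "\<Prod>i\<in>e. x i" "real k"] by linarith
  qed
  then have "(\<Sum>e\<in>E. - real k) \<le> lap_form k E x"
    unfolding lap_form_def by (rule sum_mono)
  then show ?thesis by (simp add: mult.commute)
qed

lemma inv_perron_le_lap_form:
  assumes "uniform_hypergraph n k E" "k > 0" "x \<in> perron_vectors n k j"
  shows "inv_perron n k E j \<le> lap_form k E x"
  unfolding inv_perron_eq_Inf_image
proof (rule cInf_lower)
  show "bdd_below (lap_form k E ` perron_vectors n k j)"
    by (rule bdd_belowI2) (rule lap_form_ge_on_perron_vectors[OF assms(1,2)])
qed (use assms(3) in simp)

lemma sum_power_step_vector:
  fixes c :: real
  assumes "finite A" "k > 0"
  shows "(\<Sum>i\<in>A. (if i \<in> T then c else 0) ^ k) = real (card (A \<inter> T)) * c ^ k"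
proof -
  have "(\<Sum>i\<in>A. (if i \<in> T then c else 0) ^ k) = (\<Sum>i\<in>A. if i \<in> T then c ^ k else 0)"
    using assms(2) by (intro sum.cong) auto
  also have "\<dots> = (\<Sum>i\<in>A \<inter> T. c ^ k)"
    using sum.inter_restrict[OF assms(1), of "\<lambda>_. c ^ k" T] by simp
  finally show ?thesis
    by simp
qed

lemma edge_term_step_vector:
  fixes c :: real
  assumes "finite e" "card e = k" "k > 0"
  shows "(\<Sum>i\<in>e. (if i \<in> T then c else 0) ^ k) - real k * (\<Prod>i\<in>e. if i \<in> T then c else 0)
         = (if e \<subseteq> T then 0 else real (card (e \<inter> T)) * c ^ k)"
proof -
  have sum_eq: "(\<Sum>i\<in>e. (if i \<in> T then c else 0) ^ k) = real (card (e \<inter> T)) * c ^ k"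
    using assms(1,3) by (rule sum_power_step_vector)
  show ?thesis
  proof (cases "e \<subseteq> T")
    case True
    then have "(\<Prod>i\<in>e. if i \<in> T then c else 0) = c ^ k" and "e \<inter> T = e"
      using assms(2) by (auto simp: subset_iff)
    then show ?thesis
      using True sum_eq assms(2) by simp
  next
    case False
    then have "(\<Prod>i\<in>e. if i \<in> T then c else 0) = 0"
      using assms(1) by (auto intro: prod_zero)
    then show ?thesis
      using False sum_eq by simp
  qed
qed

lemma lap_form_step_vector:
  fixes c :: real
  assumes "uniform_hypergraph n k E" "k > 0" "T \<subseteq> {1..n}"
  shows "lap_form k E (\<lambda>i. if i \<in> T then c else 0)
         = c ^ k * (\<Sum>e\<in>cut_edges n E T. real (card (e \<inter> T)))"
proof -
  have edges: "e \<subseteq> {1..n} \<and> card e = k" if "e \<in> E" for e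
    using assms(1) that unfolding uniform_hypergraph_def by auto
  have "lap_form k E (\<lambda>i. if i \<in> T then c else 0)
        = (\<Sum>e\<in>E. if e \<in> cut_edges n E T then c ^ k * real (card (e \<inter> T)) else 0)"
    unfolding lap_form_def
  proof (rule sum.cong)
    fix e assume "e \<in> E"
    with edges have "finite e" "card e = k" "e \<subseteq> {1..n}"
      by (auto intro: finite_subset)
    with \<open>e \<in> E\<close> show "(\<Sum>i\<in>e. (if i \<in> T then c else 0) ^ k)
          - real k * (\<Prod>i\<in>e. if i \<in> T then c else 0)
        = (if e \<in> cut_edges n E T then c ^ k * real (card (e \<inter> T)) else 0)"
      using assms(2) by (auto simp: edge_term_step_vector cut_edges_def)
  qed simp
  also have "\<dots> = (\<Sum>e\<in>cut_edges n E T. c ^ k * real (card (e \<inter> T)))"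
    using uniform_hypergraph_finite[OF assms(1)] unfolding cut_edges_def
    by (simp add: sum.inter_filter)
  finally show ?thesis
    by (simp add: sum_distrib_left)
qed

lemma inv_perron_le_cut_average:
  assumes "uniform_hypergraph n k E" "k > 0" "T \<subseteq> {1..n}" "T \<noteq> {}" "j \<notin> T"
  shows "inv_perron n k E j \<le> (\<Sum>e\<in>cut_edges n E T. real (card (e \<inter> T))) / real (card T)"
proof -
  have card_T: "card T > 0"
    using assms(3,4) by (meson card_gt_0_iff finite_atLeastAtMost finite_subset)
  define c where "c = root k (1 / real (card T))"
  have c: "c \<ge> 0" "c ^ k = 1 / real (card T)"
    unfolding c_def using assms(2) by (auto simp: real_root_pow_pos2)
  define x where "x = (\<lambda>i. if i \<in> T then c else 0)"
  have "(\<Sum>i=1..n. x i ^ k) = 1"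
    using sum_power_step_vector[of "{1..n}" k T c] assms(2,3) c(2) card_T
    by (simp add: x_def Int_absorb1)
  then have "x \<in> perron_vectors n k j"
    using assms(3,5) card_T c(1) unfolding perron_vectors_def x_def by auto
  then have "inv_perron n k E j \<le> lap_form k E x"
    by (rule inv_perron_le_lap_form[OF assms(1,2)])
  then show ?thesis
    unfolding x_def lap_form_step_vector[OF assms(1-3)] c(2) by simp
qed

lemma cut_edges_complement:
  assumes "S \<subseteq> {1..n}"
  shows "cut_edges n E ({1..n} - S) = cut_edges n E S"
  using assms unfolding cut_edges_def by auto

lemma card_edge_split:
  fixes n :: nat
  assumes "e \<subseteq> {1..n}"
  shows "card (e \<inter> S) + card (e \<inter> ({1..n} - S)) = card e"
proof -
  have "finite e"
    using assms by (rule finite_subset) simp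
  then have "card (e \<inter> S) + card (e - S) = card e"
    by (rule card_Int_Diff[symmetric])
  moreover have "e - S = e \<inter> ({1..n} - S)"
    using assms by auto
  ultimately show ?thesis
    by simp
qed

lemma unbalanced_average_le:
  fixes p q a b :: real
  assumes "0 < p" "p \<le> q" "0 \<le> a"
  shows "p * (a / q) + q * (b / p) \<le> q / p * (a + b)"
proof -
  have "p * p * a \<le> q * q * a"
    using assms by (intro mult_right_mono mult_mono) auto
  then have "p * (a / q) \<le> q * (a / p)"
    using assms by (simp add: field_simps)
  moreover have "q / p * (a + b) = q * (a / p) + q * (b / p)"
    using assms(1) by (simp add: field_simps)
  ultimately show ?thesis
    by linarith
qed

lemma sum_inv_perron_le_cut:
  assumes "uniform_hypergraph n k E" "k > 0" "S \<subseteq> {1..n}" "S \<noteq> {}"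
    and "card S \<le> card ({1..n} - S)"
  shows "(\<Sum>j=1..n. inv_perron n k E j)
         \<le> real (card ({1..n} - S)) / real (card S) * (real k * real (card (cut_edges n E S)))"
proof -
  define T where "T = {1..n} - S"
  define p where "p = real (card S)"
  define q where "q = real (card T)"
  define C where "C = cut_edges n E S"
  define a where "a = (\<Sum>e\<in>C. real (card (e \<inter> T)))"
  define b where "b = (\<Sum>e\<in>C. real (card (e \<inter> S)))"
  have "finite S" "T \<subseteq> {1..n}"
    using assms(3) finite_subset unfolding T_def by auto
  have "p > 0" "p \<le> q"
    using assms(3-5) \<open>finite S\<close> unfolding p_def q_def T_def by auto
  have "T \<noteq> {}"
    using \<open>p > 0\<close> \<open>p \<le> q\<close> unfolding q_def by auto
  have "a + b = real k * real (card C)"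
  proof -
    have "real (card (e \<inter> T)) + real (card (e \<inter> S)) = real k" if "e \<in> C" for e
      using that assms(1,3) card_edge_split[of e n S]
      unfolding C_def T_def cut_edges_def uniform_hypergraph_def by auto
    then show ?thesis
      unfolding a_def b_def by (simp add: sum.distrib[symmetric])
  qed
  have "cut_edges n E T = C"
    unfolding T_def C_def by (rule cut_edges_complement[OF assms(3)])
  then have "inv_perron n k E j \<le> a / q" if "j \<in> S" for j
    using inv_perron_le_cut_average[OF assms(1,2) \<open>T \<subseteq> {1..n}\<close> \<open>T \<noteq> {}\<close>] that
    unfolding a_def q_def T_def by auto
  then have "(\<Sum>j\<in>S. inv_perron n k E j) \<le> p * (a / q)"
    using sum_mono[of S "inv_perron n k E" "\<lambda>_. a / q"] unfolding p_def by simp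
  moreover have "inv_perron n k E j \<le> b / p" if "j \<in> T" for j
    using inv_perron_le_cut_average[OF assms(1-4)] that
    unfolding b_def p_def C_def T_def by auto
  then have "(\<Sum>j\<in>T. inv_perron n k E j) \<le> q * (b / p)"
    using sum_mono[of T "inv_perron n k E" "\<lambda>_. b / p"] unfolding q_def by simp
  moreover have "(\<Sum>j=1..n. inv_perron n k E j)
                 = (\<Sum>j\<in>S. inv_perron n k E j) + (\<Sum>j\<in>T. inv_perron n k E j)"
    using assms(3) unfolding T_def by (metis Diff_partition finite_atLeastAtMost sum.subset_diff add.commute)
  ultimately have "(\<Sum>j=1..n. inv_perron n k E j) \<le> p * (a / q) + q * (b / p)"
    by linarith
  also have "\<dots> \<le> q / p * (a + b)"
    using \<open>p > 0\<close> \<open>p \<le> q\<close> unfolding a_def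
    by (intro unbalanced_average_le sum_nonneg) auto
  finally show ?thesis
    unfolding \<open>a + b = real k * real (card C)\<close> p_def q_def T_def C_def .
qed

lemma bip_width_attained:
  obtains S where "S \<subseteq> {1..n}" "card S = n div 2" "bip_width n E = card (cut_edges n E S)"
proof -
  let ?W = "{card (cut_edges n E S) | S. S \<subseteq> {1..n} \<and> card S = n div 2}"
  have "?W \<subseteq> (\<lambda>S. card (cut_edges n E S)) ` Pow {1..n}"
    by auto
  then have "finite ?W"
    by (rule finite_subset) simp
  moreover have "?W \<noteq> {}"
    using exI[of "\<lambda>S. S \<subseteq> {1..n} \<and> card S = n div 2" "{1..n div 2}"] by auto
  ultimately have "bip_width n E \<in> ?W"
    unfolding bip_width_def by (rule Min_in)
  then show ?thesis
    using that by blast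
qed

lemma bisection_ratio:
  assumes "n \<ge> 1"
  shows "(real n + (-1) ^ n) / (real n + 1) = real (n div 2) / real (n - n div 2)"
proof (cases "even n")
  case True
  then show ?thesis
    using assms by (auto elim: evenE)
next
  case False
  then obtain m where "n = 2 * m + 1"
    by (metis oddE)
  then show ?thesis
    by (simp add: field_simps)
qed

theorem theorem3p2:
  fixes n k :: nat and E :: "nat set set"
  assumes "uniform_hypergraph n k E" and "k \<ge> 2" and "n \<ge> 2"
  shows "real (bip_width n E) \<ge>
           (real n + (-1) ^ n) / (real k * (real n + 1)) * (\<Sum>j=1..n. inv_perron n k E j)"
proof -
  obtain S where S: "S \<subseteq> {1..n}" "card S = n div 2"
    and width: "bip_width n E = card (cut_edges n E S)"
    by (rule bip_width_attained)
  define p where "p = real (n div 2)"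
  define q where "q = real (n - n div 2)"
  have "card ({1..n} - S) = n - n div 2"
    using S by (simp add: card_Diff_subset finite_subset)
  then have bound: "(\<Sum>j=1..n. inv_perron n k E j) \<le> q / p * (real k * real (bip_width n E))"
    using sum_inv_perron_le_cut[OF assms(1) _ S(1)] assms S(2) width
    unfolding p_def q_def by fastforce
  have "p > 0" "q > 0" "real k > 0"
    using assms(2,3) unfolding p_def q_def by auto
  have "(real n + (-1) ^ n) / (real k * (real n + 1)) = (real n + (-1) ^ n) / (real n + 1) / real k"
    by (simp add: mult.commute)
  also have "\<dots> = p / q / real k"
    using bisection_ratio[of n] assms(3) unfolding p_def q_def by simp
  finally have "(real n + (-1) ^ n) / (real k * (real n + 1)) * (\<Sum>j=1..n. inv_perron n k E j)
      = p / q / real k * (\<Sum>j=1..n. inv_perron n k E j)"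
    by simp
  also have "\<dots> \<le> p / q / real k * (q / p * (real k * real (bip_width n E)))"
    using bound \<open>p > 0\<close> \<open>q > 0\<close> by (intro mult_left_mono) auto
  also have "\<dots> = real (bip_width n E)"
    using \<open>p > 0\<close> \<open>q > 0\<close> \<open>real k > 0\<close> by simp
  finally show ?thesis .
qed

end
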